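(* Let $a\in[0,\infty)$ and let $t:[0,1]\to[0,\infty]$ and $s:[0,\infty]\to[0,1]$ be continuous and increasing functions such that $G_{t,s}(x,y)=s(t(x)+t(y))$ defines a grouping function $G_{t,s}:[0,1]^2\to[0,1]$ having $0$ as neutral element (i.e. $G_{t,s}(x,0)=x$ for all $x\in[0,1]$). If $t(x)=\frac{a}{2}$ holds if and only if $x=0$, then $G_{t,s}$ is associative.
   Context: "Increasing" means non-decreasing. Arithmetic in $[0,\infty]$ uses $c+\infty=\infty$; continuity on $[0,\infty]$ refers to the usual topology of the extended half-line. A grouping function is a map $G:[0,1]^2\to[0,1]$ that is (G1) commutative, (G2) $G(x,y)=0$ iff $x=y=0$, (G3) $G(x,y)=1$ iff $x=1$ or $y=1$, (G4) increasing in each variable, (G5) continuous. *)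

theory Defs
  imports "HOL-Analysis.Analysis" "HOL-Library.Extended_Nonnegative_Real"
begin

definition grouping_function :: "(real \<Rightarrow> real \<Rightarrow> real) \<Rightarrow> bool" where
  "grouping_function G \<longleftrightarrow>
     (\<forall>x\<in>{0..1}. \<forall>y\<in>{0..1}. G x y \<in> {0..1}) \<and>
     (\<forall>x\<in>{0..1}. \<forall>y\<in>{0..1}. G x y = G y x) \<and>
     (\<forall>x\<in>{0..1}. \<forall>y\<in>{0..1}. G x y = 0 \<longleftrightarrow> x = 0 \<and> y = 0) \<and>
     (\<forall>x\<in>{0..1}. \<forall>y\<in>{0..1}. G x y = 1 \<longleftrightarrow> x = 1 \<or> y = 1) \<and>
     (\<forall>x\<in>{0..1}. \<forall>x'\<in>{0..1}. \<forall>y\<in>{0..1}. x \<le> x' \<longrightarrow> G x y \<le> G x' y) \<and>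
     (\<forall>x\<in>{0..1}. \<forall>y\<in>{0..1}. \<forall>y'\<in>{0..1}. y \<le> y' \<longrightarrow> G x y \<le> G x y') \<and>
     continuous_on ({0..1} \<times> {0..1}) (\<lambda>(x, y). G x y)"

end

theory Submission
  imports Defs
begin

text \<open>Neutrality of 0 says s(t(x) + c) = x, where c = t(0) is finite since t(0) = a/2. The grouping
  axiom G(x,x) = 1 \<Longrightarrow> x = 1 forces t(1) = \<infinity>: otherwise the midpoint v of c and t(1) is attained
  as v = t(x) with x < 1, and G(x,x) = s(t(1) + c) = 1. Hence t maps [0,1] onto [c,\<infinity>], so
  t(s(u)) + c = u for every u \<ge> 2c; in particular t(G(x,y)) + c = t(x) + t(y), and both bracketings
  of the triple product are s applied to t(x) + t(y) + t(z) - c.\<close>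

lemma ennreal_midpoint:
  fixes c r :: ennreal
  assumes "c < r" "r \<noteq> \<infinity>"
  obtains v where "c < v" "v < r" "v + v = r + c"
proof -
  obtain x y where xy: "c = ennreal x" "r = ennreal y" "0 \<le> x" "0 \<le> y"
    using assms by (cases c; cases r) auto
  then have "x < y"
    using assms(1) by (simp add: ennreal_less_iff)
  then show thesis
    using xy by (intro that[of "ennreal ((x + y) / 2)"])
      (simp_all add: ennreal_less_iff flip: ennreal_plus)
qed

lemma generator_at_one_infinite:
  fixes t :: "real \<Rightarrow> ennreal" and s :: "ennreal \<Rightarrow> real"
  assumes t_cont: "continuous_on {0..1} t"
    and t0_less: "t 0 < t 1"
    and s_one: "s (t 1 + t 0) = 1"
    and diagonal_one: "\<forall>x\<in>{0..1}. s (t x + t x) = 1 \<longrightarrow> x = 1"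
  shows "t 1 = \<infinity>"
proof (rule ccontr)
  assume "t 1 \<noteq> \<infinity>"
  then obtain v where v: "t 0 < v" "v < t 1" "v + v = t 1 + t 0"
    using ennreal_midpoint t0_less by blast
  obtain x where x: "x \<in> {0..1}" "t x = v"
    using IVT'[of t 0 v 1] v t_cont by fastforce
  have "x = 1"
    using diagonal_one x v(3) s_one by auto
  then show False
    using x v(2) by simp
qed

lemma generator_shift_inverse:
  fixes t :: "real \<Rightarrow> ennreal" and s :: "ennreal \<Rightarrow> real"
  assumes t_cont: "continuous_on {0..1} t"
    and t1_infinite: "t 1 = \<infinity>"
    and neutral: "\<forall>x\<in>{0..1}. s (t x + t 0) = x"
    and u: "t 0 + t 0 \<le> u"
  shows "t (s u) + t 0 = u"
proof -
  have "t 0 \<le> u - t 0"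
    using u by (simp add: ennreal_le_minus_iff)
  then obtain w where w: "w \<in> {0..1}" "t w = u - t 0"
    using IVT'[of t 0 "u - t 0" 1] t_cont t1_infinite by fastforce
  have "t 0 \<le> u"
    using u by (rule order_trans[rotated]) simp
  then have w_sum: "t w + t 0 = u"
    using w(2) by (simp add: diff_add_cancel_ennreal)
  then have "s u = w"
    using neutral w(1) by auto
  then show ?thesis
    using w_sum by simp
qed

theorem proposition6p5:
  fixes a :: real and t :: "real \<Rightarrow> ennreal" and s :: "ennreal \<Rightarrow> real"
  assumes a_nonneg: "0 \<le> a"
    and t_cont: "continuous_on {0..1} t" and t_mono: "mono_on {0..1} t"
    and s_cont: "continuous_on UNIV s" and s_mono: "mono s"
    and s_range: "\<forall>u. s u \<in> {0..1}"
    and grouping: "grouping_function (\<lambda>x y. s (t x + t y))"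
    and neutral: "\<forall>x\<in>{0..1}. s (t x + t 0) = x"
    and t_a: "\<forall>x\<in>{0..1}. t x = ennreal (a / 2) \<longleftrightarrow> x = 0"
  shows "\<forall>x\<in>{0..1}. \<forall>y\<in>{0..1}. \<forall>z\<in>{0..1}.
           s (t (s (t x + t y)) + t z) = s (t x + t (s (t y + t z)))"
proof (intro ballI)
  fix x y z :: real
  assume xyz: "x \<in> {0..1}" "y \<in> {0..1}" "z \<in> {0..1}"
  have t0: "t 0 = ennreal (a / 2)" and t1: "t 1 \<noteq> ennreal (a / 2)"
    using t_a by simp_all
  then have t0_finite: "t 0 \<noteq> \<infinity>"
    by simp
  have t_ge: "t 0 \<le> t v" if "v \<in> {0..1}" for v
    using t_mono that by (auto simp: mono_on_def)
  have t0_less: "t 0 < t 1"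
    using t_ge[of 1] t0 t1 by (simp add: order_less_le)
  have s_one: "s (t 1 + t 0) = 1"
    using neutral by simp
  have "\<forall>v\<in>{0..1}. s (t v + t v) = 1 \<longrightarrow> v = 1"
    using grouping unfolding grouping_function_def by blast
  then have t1_infinite: "t 1 = \<infinity>"
    by (rule generator_at_one_infinite[of t s, OF t_cont t0_less s_one])
  have sum: "t (s (t v + t w)) + t 0 = t v + t w" if "v \<in> {0..1}" "w \<in> {0..1}" for v w
    using generator_shift_inverse[of t s, OF t_cont t1_infinite neutral]
      add_mono[OF t_ge t_ge] that by simp
  have "t 0 + (t (s (t x + t y)) + t z) = t 0 + (t x + t (s (t y + t z)))"
    using sum[of x y] sum[of y z] xyz by (metis add.assoc add.commute)
  then show "s (t (s (t x + t y)) + t z) = s (t x + t (s (t y + t z)))"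
    using t0_finite by simp
qed

end
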